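(* Let $O,A,B$ be three pairwise distinct points of the plane, $\vec\alpha=\overrightarrow{AO}/OA$, $\vec\beta=\overrightarrow{OB}/OB$, and suppose the oriented angle $\Omega=(\widehat{\vec\alpha,\vec\beta})$ satisfies $\Omega\in\,]0,\pi[$. Let $\mathcal{E}$ be the set of all curves $X:[0,L]\to\mathbb{R}^2$ (with $L=L(X)>0$) such that $X\in W^{2,\infty}(0,L;\mathbb{R}^2)$, $\|X'(s)\|=1$ for all $s$, $X(0)=A$, $X(L)=B$, $X'(0)=\vec\alpha$, $X'(L)=\vec\beta$, and a continuous determination $\phi$ of the angle $\phi(s)=(\widehat{\vec\alpha,X'(s)})$ is nondecreasing. Then there exists a unique curve $X\in\mathcal{E}$ which, in the case $OA=OB$, consists of a single arc of circle of radius $R_a>0$ and length in $]0,R_a\pi[$, and which, in the case $OA\neq OB$, consists of an arc of circle of radius $R_a>0$ with length in $]0,R_a\pi[$ together with a line segment of nonzero length. The radius $R_a$ is unique, depends only on $O,A,B$, and $$\big\|\,\|X''\|\,\big\|_{L^\infty(0,L(X))}=\frac1{R_a}.$$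
   Context: $\|\cdot\|$ is the Euclidean norm on $\mathbb{R}^2$; $\|\,\|X''\|\,\|_{L^\infty}$ is the essential supremum of $s\mapsto\|X''(s)\|$. *)

theory Defs
  imports "HOL-Analysis.Analysis" "HOL-Probability.Essential_Supremum"
begin

text \<open>The plane is modelled as the complex numbers; the Euclidean norm is cmod.\<close>

definition d1 :: "real \<Rightarrow> (real \<Rightarrow> complex) \<Rightarrow> real \<Rightarrow> complex" where
  "d1 L X s = vector_derivative X (at s within {0..L})"

definition d2 :: "real \<Rightarrow> (real \<Rightarrow> complex) \<Rightarrow> real \<Rightarrow> complex" where
  "d2 L X s = vector_derivative (d1 L X) (at s within {0..L})"

text \<open>W^{2,infinity}(0,L): (the continuous representative is) differentiable on [0,L]
  with Lipschitz derivative.\<close>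
definition W2inf :: "real \<Rightarrow> (real \<Rightarrow> complex) \<Rightarrow> bool" where
  "W2inf L X \<longleftrightarrow> (\<forall>s\<in>{0..L}. X differentiable (at s within {0..L}))
      \<and> (\<exists>K. K-lipschitz_on {0..L} (d1 L X))"

definition Linf_d2 :: "real \<Rightarrow> (real \<Rightarrow> complex) \<Rightarrow> ereal" where
  "Linf_d2 L X = esssup (lebesgue_on {0..L}) (\<lambda>s. ereal (norm (d2 L X s)))"

definition in_E :: "complex \<Rightarrow> complex \<Rightarrow> complex \<Rightarrow> real \<Rightarrow> (real \<Rightarrow> complex) \<Rightarrow> bool" where
  "in_E Oc A B L X \<longleftrightarrow>
     (let \<alpha> = (Oc - A) / of_real (norm (Oc - A)); \<beta> = (B - Oc) / of_real (norm (B - Oc)) in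
       L > 0 \<and> W2inf L X \<and> (\<forall>s\<in>{0..L}. norm (d1 L X s) = 1)
       \<and> X 0 = A \<and> X L = B \<and> d1 L X 0 = \<alpha> \<and> d1 L X L = \<beta>
       \<and> (\<exists>\<phi>. continuous_on {0..L} \<phi> \<and> (\<forall>s\<in>{0..L}. d1 L X s = \<alpha> * cis (\<phi> s))
              \<and> mono_on {0..L} \<phi>))"

definition arc_on :: "real \<Rightarrow> real \<Rightarrow> real \<Rightarrow> (real \<Rightarrow> complex) \<Rightarrow> bool" where
  "arc_on R a b X \<longleftrightarrow> (\<exists>c \<theta> \<sigma>. \<sigma> \<in> {-1, 1::real} \<and>
      (\<forall>s\<in>{a..b}. X s = c + of_real R * cis (\<theta> + \<sigma> * (s - a) / R)))"

definition seg_on :: "real \<Rightarrow> real \<Rightarrow> (real \<Rightarrow> complex) \<Rightarrow> bool" where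
  "seg_on a b X \<longleftrightarrow> (\<exists>p u. norm u = 1 \<and> (\<forall>s\<in>{a..b}. X s = p + of_real (s - a) * u))"

definition shape :: "complex \<Rightarrow> complex \<Rightarrow> complex \<Rightarrow> real \<Rightarrow> real \<Rightarrow> (real \<Rightarrow> complex) \<Rightarrow> bool" where
  "shape Oc A B R L X \<longleftrightarrow> R > 0 \<and>
     (if dist Oc A = dist Oc B then 0 < L \<and> L < R * pi \<and> arc_on R 0 L X
      else (\<exists>l. 0 < l \<and> l < L \<and>
              ((l < R * pi \<and> arc_on R 0 l X \<and> seg_on l L X) \<or>
               (L - l < R * pi \<and> seg_on 0 l X \<and> arc_on R l L X))))"

end

theory Submission
  imports Defs
begin

text \<open>Write \<open>a\<close> and \<open>a * cis \<Omega>\<close> for the unit directions of AO and OB. On an admissible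
  curve made of an arc and a segment, the segment keeps the tangent constant, so the arc alone turns
  \<open>a\<close> into \<open>a * cis \<Omega>\<close>; being shorter than half a circle it turns counterclockwise by exactly
  \<open>\<Omega>\<close>. Hence the curve runs straight along \<open>a\<close> for some length \<open>l\<close>, along an arc of radius \<open>R\<close>
  and length \<open>R \<Omega>\<close>, then straight along \<open>a * cis \<Omega>\<close> for some length \<open>m\<close>, where \<open>l = 0\<close> or
  \<open>m = 0\<close>. Its end point is \<open>A + (l + R tan (\<Omega>/2)) a + (R tan (\<Omega>/2) + m) a cis \<Omega>\<close>, and comparing
  coordinates in the basis \<open>a, a cis \<Omega>\<close> with \<open>B = A + OA a + OB a cis \<Omega>\<close> forces
  \<open>R tan (\<Omega>/2) = min OA OB\<close> and fixes \<open>l\<close> and \<open>m\<close>. Conversely this curve, the integral of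
  \<open>a cis \<phi>\<close> for a clamped linear angle \<open>\<phi>\<close>, is admissible, and its curvature is \<open>1/R\<close> on the arc
  and \<open>0\<close> on the segments.\<close>

section \<open>Unit complex numbers\<close>

lemma norm_cis_diff_le: "norm (cis x - cis y) \<le> \<bar>x - y\<bar>"
proof -
  let ?t = "x - y"
  have "(norm (cis ?t - 1))\<^sup>2 = (cos ?t - 1)\<^sup>2 + (sin ?t)\<^sup>2"
    by (simp add: cmod_power2)
  also have "\<dots> = 2 - 2 * cos ?t"
    using sin_cos_squared_add[of ?t] by (simp add: power2_eq_square algebra_simps)
  also have "\<dots> = 4 * (sin (?t / 2))\<^sup>2"
    using cos_double_sin[of "?t / 2", unfolded mult_2 field_sum_of_halves] by simp
  also have "\<dots> \<le> ?t\<^sup>2"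
    using abs_sin_x_le_abs_x[of "?t / 2"] abs_le_square_iff[of "sin (?t / 2)" "?t / 2"]
    by (simp add: power_divide)
  finally have "norm (cis ?t - 1) \<le> \<bar>?t\<bar>"
    using abs_le_square_iff[of "norm (cis ?t - 1)" ?t] by simp
  moreover have "cis x - cis y = cis y * (cis ?t - 1)"
    by (simp add: cis_mult right_diff_distrib)
  ultimately show ?thesis by (simp add: norm_mult)
qed

lemma i_mult_one_minus_cis:
  assumes "cos \<Omega> \<noteq> -1"
  shows "\<i> * (1 - cis \<Omega>) = of_real (tan (\<Omega> / 2)) * (1 + cis \<Omega>)"
proof -
  have tan: "tan (\<Omega> / 2) = sin \<Omega> / (1 + cos \<Omega>)"
    using tan_half[of "\<Omega> / 2"] by (simp add: add.commute)
  have "1 + cos \<Omega> \<noteq> 0" using assms by linarith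
  moreover have "sin \<Omega> * sin \<Omega> = (1 - cos \<Omega>) * (1 + cos \<Omega>)"
    using sin_cos_squared_add[of \<Omega>] by (simp add: power2_eq_square algebra_simps)
  ultimately show ?thesis unfolding tan by (simp add: complex_eq_iff field_simps)
qed

lemma cis_eq_cis_imp:
  assumes "\<sigma> \<in> {-1, 1}" "0 < m" "m < pi" "cis (\<sigma> * m) = cis \<Omega>" "0 < \<Omega>" "\<Omega> < pi"
  shows "\<sigma> = 1 \<and> m = \<Omega>"
proof -
  have "Arg (cis (\<sigma> * m)) = \<sigma> * m" by (rule Arg_cis) (use assms in auto)
  moreover have "Arg (cis \<Omega>) = \<Omega>" by (rule Arg_cis) (use assms in auto)
  ultimately have "\<sigma> * m = \<Omega>" using assms(4) by metis
  then show ?thesis using assms by auto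
qed

lemma real_combination_cis_eq_iff:
  assumes "a \<noteq> 0" "sin \<Omega> \<noteq> 0"
  shows "of_real x * a + of_real y * (a * cis \<Omega>) = of_real x' * a + of_real y' * (a * cis \<Omega>)
    \<longleftrightarrow> x = x' \<and> y = y'"
proof
  assume "of_real x * a + of_real y * (a * cis \<Omega>) = of_real x' * a + of_real y' * (a * cis \<Omega>)"
  then have "a * (of_real (x - x') + of_real (y - y') * cis \<Omega>) = 0"
    by (simp add: algebra_simps)
  then have "of_real (x - x') + of_real (y - y') * cis \<Omega> = 0"
    using assms(1) by simp
  then have "x - x' + (y - y') * cos \<Omega> = 0" "(y - y') * sin \<Omega> = 0"
    by (simp_all add: complex_eq_iff)
  then show "x = x' \<and> y = y'" using assms(2) by auto
qed simp

lemma cis_Arg_divide: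
  assumes "norm a = 1" "norm b = 1"
  shows "b = a * cis (Arg (b / a))"
proof -
  have "a \<noteq> 0" using assms by auto
  have "cis (Arg (b / a)) = sgn (b / a)"
    using \<open>a \<noteq> 0\<close> assms by (intro cis_Arg) auto
  also have "\<dots> = b / a" using assms by (simp add: sgn_div_norm norm_divide)
  finally show ?thesis using \<open>a \<noteq> 0\<close> by simp
qed

section \<open>Tangents and curvature of curves in W2inf\<close>

lemma d1_eqI:
  assumes "W2inf L X" "0 \<le> p" "p < q" "q \<le> L" "s \<in> {p..q}"
    and "(X has_vector_derivative D) (at s within {p..q})"
  shows "d1 L X s = D"
proof -
  have "(X has_vector_derivative d1 L X s) (at s within {0..L})"
    using assms(1-5) unfolding W2inf_def d1_def by (auto simp: vector_derivative_works)
  then have "(X has_vector_derivative d1 L X s) (at s within {p..q})"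
    by (rule has_vector_derivative_within_subset) (use assms in auto)
  then show ?thesis using assms(3,5,6) vector_derivative_within_closed_interval by metis
qed

lemma W2inf_integral_d1:
  assumes "W2inf L X" "s \<in> {0..L}"
  shows "X s = X 0 + integral {0..s} (d1 L X)"
proof -
  have "(X has_vector_derivative d1 L X x) (at x within {0..s})" if "x \<in> {0..s}" for x
  proof (rule has_vector_derivative_within_subset)
    show "(X has_vector_derivative d1 L X x) (at x within {0..L})"
      using assms that unfolding W2inf_def d1_def by (auto simp: vector_derivative_works)
  qed (use assms in auto)
  then have "(d1 L X has_integral X s - X 0) {0..s}"
    using assms(2) by (intro fundamental_theorem_of_calculus) auto
  then show ?thesis by (simp add: integral_unique)
qed

lemma d1_const_on_seg:
  assumes "seg_on p q X" "W2inf L X" "0 \<le> p" "p < q" "q \<le> L" "s \<in> {p..q}"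
  shows "d1 L X s = d1 L X q"
proof -
  obtain P u where X: "\<forall>s\<in>{p..q}. X s = P + of_real (s - p) * u"
    using assms(1) unfolding seg_on_def by blast
  have "d1 L X s = u" if "s \<in> {p..q}" for s
  proof (rule d1_eqI[OF assms(2-5) that])
    have line: "((\<lambda>s. P + of_real (s - p) * u) has_vector_derivative u) (at s within {p..q})"
      by (auto intro!: derivative_eq_intros simp: has_vector_derivative_def scaleR_conv_of_real)
    show "(X has_vector_derivative u) (at s within {p..q})"
      by (rule has_vector_derivative_transform[OF that _ line]) (use X in auto)
  qed
  then show ?thesis using assms(4,6) by simp
qed

lemma d1_on_arc:
  assumes "arc_on R p q X" "W2inf L X" "0 \<le> p" "p < q" "q \<le> L" "0 < R" "q - p < R * pi"
    and "d1 L X q = d1 L X p * cis \<Omega>" "0 < \<Omega>" "\<Omega> < pi"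
  shows "q - p = R * \<Omega> \<and> (\<forall>s\<in>{p..q}. d1 L X s = d1 L X p * cis ((s - p) / R))"
proof -
  obtain c \<theta> \<sigma> where \<sigma>: "\<sigma> \<in> {-1, 1}"
    and X: "\<forall>s\<in>{p..q}. X s = c + of_real R * cis (\<theta> + \<sigma> * (s - p) / R)"
    using assms(1) unfolding arc_on_def by blast
  \<comment> \<open>A clockwise arc would have to turn by \<open>2 pi - \<Omega> > pi\<close>, which the length bound excludes.\<close>
  define v where "v = \<i> * of_real \<sigma> * cis \<theta>"
  have d1: "d1 L X s = v * cis (\<sigma> * (s - p) / R)" if "s \<in> {p..q}" for s
  proof (rule d1_eqI[OF assms(2-5) that])
    have circle: "((\<lambda>s. c + of_real R * cis (\<theta> + \<sigma> * (s - p) / R)) has_vector_derivative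
        v * cis (\<sigma> * (s - p) / R)) (at s within {p..q})"
      using assms(6) unfolding v_def has_vector_derivative_def
      by (auto intro!: derivative_eq_intros simp: algebra_simps cis_mult scaleR_conv_of_real)
    show "(X has_vector_derivative v * cis (\<sigma> * (s - p) / R)) (at s within {p..q})"
      by (rule has_vector_derivative_transform[OF that _ circle]) (use X in auto)
  qed
  have "v \<noteq> 0" using \<sigma> unfolding v_def by auto
  moreover have "d1 L X p = v" using d1[of p] assms(4) by simp
  ultimately have "cis (\<sigma> * ((q - p) / R)) = cis \<Omega>"
    using d1[of q] assms(4,8) by simp
  moreover have "0 < (q - p) / R" "(q - p) / R < pi"
    using assms(4,6,7) by (simp_all add: field_simps)
  ultimately have "\<sigma> = 1" "(q - p) / R = \<Omega>"
    using cis_eq_cis_imp[OF \<sigma>] assms(9,10) by blast+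
  then show ?thesis using d1 \<open>d1 L X p = v\<close> assms(6) by (simp add: field_simps)
qed

lemma esssup_lebesgue_on_step:
  fixes f :: "real \<Rightarrow> real"
  assumes "0 \<le> p" "p < q" "q \<le> L" "finite N" "0 < c"
    and f: "\<And>s. s \<in> {0..L} - N \<Longrightarrow> f s = (if s \<in> {p<..<q} then c else 0)"
  shows "esssup (lebesgue_on {0..L}) (\<lambda>s. ereal (f s)) = ereal c"
proof -
  let ?M = "lebesgue_on {0..L}"
  have Ioo: "{p<..<q} \<in> sets ?M" using assms(1,3) by (subst sets_restrict_space_iff) auto
  have points: "{x} \<in> sets ?M" "emeasure ?M {x} = 0" if "x \<in> {0..L}" for x
    using that by (subst sets_restrict_space_iff, auto,
        subst emeasure_restrict_space, auto simp: emeasure_completion emeasure_lborel_singleton)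
  have N: "countable (N \<inter> {0..L})" using assms(4) by (simp add: countable_finite)
  have "(\<lambda>s. ereal (if s \<in> {p<..<q} then c else 0)) \<in> borel_measurable ?M"
    using Ioo by measurable
  then have meas: "(\<lambda>s. ereal (f s)) \<in> borel_measurable ?M"
    by (rule measurable_discrete_difference[OF _ N]) (use points f in auto)
  have ae: "AE s in ?M. s \<notin> N \<inter> {0..L}"
    by (rule AE_discrete_difference[OF N]) (use points in auto)
  have "esssup ?M (\<lambda>s. ereal (f s)) \<le> ereal c"
  proof (rule esssup_I[OF meas])
    show "AE s in ?M. ereal (f s) \<le> ereal c"
      using ae AE_space[of ?M] by eventually_elim (use f assms in auto)
  qed
  moreover have "\<not> esssup ?M (\<lambda>s. ereal (f s)) < ereal c"
  proof
    assume less: "esssup ?M (\<lambda>s. ereal (f s)) < ereal c"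
    have "AE s in ?M. s \<notin> {p<..<q}"
      using ae AE_space[of ?M] esssup_AE[of "\<lambda>s. ereal (f s)" ?M]
      by eventually_elim (use f assms less in force)
    then have "emeasure ?M {p<..<q} = 0"
      by (subst (asm) AE_iff_measurable[OF Ioo]) (use assms(1,3) in auto)
    moreover have "emeasure ?M {p<..<q} = ennreal (q - p)"
      using assms(1-3)
      by (subst emeasure_restrict_space) (auto simp: emeasure_completion emeasure_lborel_Ioo)
    ultimately show False using assms(2) by simp
  qed
  ultimately show ?thesis by simp
qed

lemma d2_eqI:
  assumes "s \<in> {0<..<L}" "\<And>u. u \<in> {0..L} \<Longrightarrow> d1 L X u = g u"
    and "(g has_vector_derivative D) (at s)"
  shows "d2 L X s = D"
proof -
  have "(d1 L X has_vector_derivative D) (at s within {0..L})"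
    by (rule has_vector_derivative_transform[of s, OF _ assms(2) has_vector_derivative_at_within])
      (use assms in auto)
  then show ?thesis
    unfolding d2_def using assms(1) by (intro vector_derivative_within_closed_interval) auto
qed

section \<open>Turning curves\<close>

locale corner =
  fixes A a :: complex and \<Omega> :: real
  assumes norm_a: "norm a = 1" and angle_pos: "0 < \<Omega>" and angle_less_pi: "\<Omega> < pi"
begin

definition turn_angle :: "real \<Rightarrow> real \<Rightarrow> real \<Rightarrow> real" where
  "turn_angle l R s = min (max ((s - l) / R) 0) \<Omega>"

definition turn_curve :: "real \<Rightarrow> real \<Rightarrow> real \<Rightarrow> complex" where
  "turn_curve l R s = A + integral {0..s} (\<lambda>u. a * cis (turn_angle l R u))"

lemma cos_angle_neq: "cos \<Omega> \<noteq> -1"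
  using cos_monotone_0_pi[of \<Omega> pi] angle_pos angle_less_pi by simp

lemma sin_angle_pos: "0 < sin \<Omega>"
  using sin_gt_zero angle_pos angle_less_pi by simp

lemma tan_half_angle_pos: "0 < tan (\<Omega> / 2)"
  using angle_pos angle_less_pi by (intro tan_gt_zero) auto

context
  fixes l R :: real
  assumes l_nonneg: "0 \<le> l" and R_pos: "0 < R"
begin

lemma turn_angle_before: "s \<le> l \<Longrightarrow> turn_angle l R s = 0"
  using R_pos angle_pos unfolding turn_angle_def by (simp add: divide_nonpos_pos)

lemma turn_angle_on_arc: "l \<le> s \<Longrightarrow> s \<le> l + R * \<Omega> \<Longrightarrow> turn_angle l R s = (s - l) / R"
  using R_pos angle_pos unfolding turn_angle_def by (auto simp: field_simps)

lemma turn_angle_after: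
  assumes "l + R * \<Omega> \<le> s"
  shows "turn_angle l R s = \<Omega>"
proof -
  have "\<Omega> \<le> (s - l) / R" using assms R_pos by (simp add: pos_le_divide_eq mult.commute)
  then show ?thesis using angle_pos unfolding turn_angle_def by simp
qed

lemma mono_turn_angle: "mono (turn_angle l R)"
proof (rule monoI)
  fix x y :: real assume "x \<le> y"
  then have "(x - l) / R \<le> (y - l) / R" using R_pos by (simp add: divide_right_mono)
  then show "turn_angle l R x \<le> turn_angle l R y" unfolding turn_angle_def by linarith
qed

lemma continuous_on_turn_angle: "continuous_on S (turn_angle l R)"
  unfolding turn_angle_def by (intro continuous_intros) (use R_pos in auto)

lemma turn_angle_diff_le: "\<bar>turn_angle l R x - turn_angle l R y\<bar> \<le> \<bar>x - y\<bar> / R"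
proof -
  have "\<bar>turn_angle l R x - turn_angle l R y\<bar> \<le> \<bar>(x - l) / R - (y - l) / R\<bar>"
    unfolding turn_angle_def by (auto simp: min_def max_def abs_if)
  also have "\<dots> = \<bar>x - y\<bar> / R" using R_pos by (simp add: diff_divide_distrib[symmetric])
  finally show ?thesis .
qed

lemma turn_curve_has_vector_derivative:
  "s \<in> {0..L} \<Longrightarrow>
    (turn_curve l R has_vector_derivative a * cis (turn_angle l R s)) (at s within {0..L})"
  unfolding turn_curve_def
  by (auto intro!: derivative_eq_intros integral_has_vector_derivative continuous_intros
      continuous_on_turn_angle)

lemma d1_turn_curve:
  "0 < L \<Longrightarrow> s \<in> {0..L} \<Longrightarrow> d1 L (turn_curve l R) s = a * cis (turn_angle l R s)"
  unfolding d1_def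
  by (intro vector_derivative_within_closed_interval turn_curve_has_vector_derivative) auto

lemma W2inf_turn_curve: "0 < L \<Longrightarrow> W2inf L (turn_curve l R)"
  unfolding W2inf_def
proof (intro conjI ballI exI)
  show "turn_curve l R differentiable (at s within {0..L})" if "s \<in> {0..L}" for s
    using turn_curve_has_vector_derivative[OF that] by (rule differentiableI_vector)
  assume "0 < L"
  show "(1 / R)-lipschitz_on {0..L} (d1 L (turn_curve l R))"
  proof (rule lipschitz_onI)
    fix x y assume xy: "x \<in> {0..L}" "y \<in> {0..L}"
    have "dist (d1 L (turn_curve l R) x) (d1 L (turn_curve l R) y)
        = norm (cis (turn_angle l R x) - cis (turn_angle l R y))"
      using xy \<open>0 < L\<close> norm_a
      by (simp add: d1_turn_curve dist_norm norm_mult flip: right_diff_distrib)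
    also have "\<dots> \<le> \<bar>x - y\<bar> / R"
      using norm_cis_diff_le turn_angle_diff_le by (rule order_trans)
    finally show "dist (d1 L (turn_curve l R) x) (d1 L (turn_curve l R) y) \<le> 1 / R * dist x y"
      by (simp add: dist_real_def)
  qed (use R_pos in simp)
qed

lemma turn_curve_eq_antiderivative:
  assumes "0 \<le> p" "p \<le> s"
    and "\<And>u. u \<in> {p..s} \<Longrightarrow> (F has_vector_derivative a * cis (turn_angle l R u)) (at u within {p..s})"
  shows "turn_curve l R s = turn_curve l R p + (F s - F p)"
proof -
  let ?g = "\<lambda>u. a * cis (turn_angle l R u)"
  have "?g integrable_on {0..s}"
    by (intro integrable_continuous_interval continuous_intros continuous_on_turn_angle)
  then have "integral {0..p} ?g + integral {p..s} ?g = integral {0..s} ?g"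
    using assms(1,2) by (intro Henstock_Kurzweil_Integration.integral_combine)
  moreover have "integral {p..s} ?g = F s - F p"
    using assms by (intro integral_unique fundamental_theorem_of_calculus) auto
  ultimately show ?thesis unfolding turn_curve_def by (metis add.assoc)
qed

lemma turn_curve_initial:
  assumes "s \<in> {0..l}"
  shows "turn_curve l R s = A + of_real s * a"
proof -
  have "turn_curve l R s = turn_curve l R 0 + (of_real s * a - of_real 0 * a)"
  proof (rule turn_curve_eq_antiderivative)
    fix u assume "u \<in> {0..s}"
    then have "a * cis (turn_angle l R u) = a" using assms turn_angle_before by simp
    then show "((\<lambda>x. of_real x * a) has_vector_derivative a * cis (turn_angle l R u)) (at u within {0..s})"
      by (auto intro!: derivative_eq_intros simp: has_vector_derivative_def scaleR_conv_of_real)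
  qed (use assms in auto)
  then show ?thesis by (simp add: turn_curve_def)
qed

lemma turn_curve_arc:
  assumes "s \<in> {l..l + R * \<Omega>}"
  shows "turn_curve l R s = A + of_real l * a + \<i> * of_real R * a * (1 - cis ((s - l) / R))"
proof -
  let ?F = "\<lambda>x. \<i> * of_real R * a * (1 - cis ((x - l) / R))"
  have "turn_curve l R s = turn_curve l R l + (?F s - ?F l)"
  proof (rule turn_curve_eq_antiderivative)
    fix u assume "u \<in> {l..s}"
    then have "a * cis (turn_angle l R u) = a * cis ((u - l) / R)"
      using assms turn_angle_on_arc by simp
    then show "(?F has_vector_derivative a * cis (turn_angle l R u)) (at u within {l..s})"
      using R_pos by (auto intro!: derivative_eq_intros
          simp: has_vector_derivative_def scaleR_conv_of_real fun_eq_iff algebra_simps)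
  qed (use assms l_nonneg in auto)
  then show ?thesis using l_nonneg by (simp add: turn_curve_initial)
qed

lemma turn_curve_final:
  assumes "l + R * \<Omega> \<le> s"
  shows "turn_curve l R s = A + of_real (l + R * tan (\<Omega> / 2)) * a
    + of_real (R * tan (\<Omega> / 2) + (s - l - R * \<Omega>)) * (a * cis \<Omega>)"
proof -
  let ?p = "l + R * \<Omega>"
  let ?F = "\<lambda>x. of_real x * (a * cis \<Omega>)"
  have "turn_curve l R s = turn_curve l R ?p + (?F s - ?F ?p)"
  proof (rule turn_curve_eq_antiderivative)
    fix u assume "u \<in> {?p..s}"
    then have "a * cis (turn_angle l R u) = a * cis \<Omega>" using turn_angle_after by simp
    then show "(?F has_vector_derivative a * cis (turn_angle l R u)) (at u within {?p..s})"
      by (auto intro!: derivative_eq_intros simp: has_vector_derivative_def scaleR_conv_of_real)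
  qed (use assms l_nonneg R_pos angle_pos in auto)
  moreover have "turn_curve l R ?p = A + of_real (l + R * tan (\<Omega> / 2)) * a
      + of_real (R * tan (\<Omega> / 2)) * (a * cis \<Omega>)"
  proof -
    have "turn_curve l R ?p = A + of_real l * a + of_real R * a * (\<i> * (1 - cis \<Omega>))"
      using turn_curve_arc[of ?p] R_pos angle_pos by (simp add: mult_ac)
    also have "\<dots> = A + of_real l * a + of_real R * a * (of_real (tan (\<Omega> / 2)) * (1 + cis \<Omega>))"
      by (simp only: i_mult_one_minus_cis[OF cos_angle_neq])
    finally show ?thesis by (simp add: algebra_simps)
  qed
  ultimately show ?thesis by (simp add: algebra_simps)
qed

lemma seg_on_turn_curve_initial: "seg_on 0 l (turn_curve l R)"
  unfolding seg_on_def using norm_a turn_curve_initial by auto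

lemma arc_on_turn_curve: "arc_on R l (l + R * \<Omega>) (turn_curve l R)"
  unfolding arc_on_def
proof (intro exI conjI ballI)
  have "cis (Arg (- \<i> * a)) = sgn (- \<i> * a)"
    using norm_a by (intro cis_Arg) auto
  then have cis_Arg: "cis (Arg (- \<i> * a)) = - \<i> * a"
    using norm_a by (simp add: sgn_div_norm norm_mult)
  fix s assume "s \<in> {l..l + R * \<Omega>}"
  then show "turn_curve l R s = (A + of_real l * a + \<i> * of_real R * a)
      + of_real R * cis (Arg (- \<i> * a) + 1 * (s - l) / R)"
    using cis_Arg by (simp add: turn_curve_arc cis_mult algebra_simps flip: cis_mult)
qed simp

lemma seg_on_turn_curve_final: "seg_on (l + R * \<Omega>) L (turn_curve l R)"
  unfolding seg_on_def
proof (intro exI conjI ballI)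
  fix s assume "s \<in> {l + R * \<Omega>..L}"
  then show "turn_curve l R s = (A + of_real (l + R * tan (\<Omega> / 2)) * a
      + of_real (R * tan (\<Omega> / 2)) * (a * cis \<Omega>)) + of_real (s - (l + R * \<Omega>)) * (a * cis \<Omega>)"
    by (simp add: turn_curve_final algebra_simps)
qed (simp add: norm_mult norm_a)

lemma norm_d2_turn_curve:
  assumes "l + R * \<Omega> \<le> L" "s \<in> {0<..<L} - {l, l + R * \<Omega>}"
  shows "norm (d2 L (turn_curve l R) s) = (if s \<in> {l<..<l + R * \<Omega>} then 1 / R else 0)"
proof -
  let ?g = "\<lambda>u. a * cis (turn_angle l R u)"
  have d1: "d1 L (turn_curve l R) u = ?g u" if "u \<in> {0..L}" for u
    using d1_turn_curve that assms(2) by auto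
  have g: "(?g has_vector_derivative D) (at s)"
    if "open S" "s \<in> S" "\<And>u. u \<in> S \<Longrightarrow> ?g u = h u" "(h has_vector_derivative D) (at s)" for S h D
    by (rule has_vector_derivative_transform_within_open[OF that(4,1,2)]) (use that(3) in auto)
  consider "s < l" | "s \<in> {l<..<l + R * \<Omega>}" | "l + R * \<Omega> < s"
    using assms(2) by force
  then show ?thesis
  proof cases
    case 1
    have "d2 L (turn_curve l R) s = 0"
      using assms(2) d1 g[of "{..<l}" "\<lambda>_. a"] 1 turn_angle_before by (intro d2_eqI) auto
    then show ?thesis using 1 by simp
  next
    case 2
    let ?D = "a * (\<i> * of_real (1 / R)) * cis ((s - l) / R)"
    have "((\<lambda>u. a * cis ((u - l) / R)) has_vector_derivative ?D) (at s)"
      using R_pos by (auto intro!: derivative_eq_intros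
          simp: has_vector_derivative_def fun_eq_iff scaleR_conv_of_real algebra_simps)
    then have "(?g has_vector_derivative ?D) (at s)"
      using 2 turn_angle_on_arc by (intro g[of "{l<..<l + R * \<Omega>}"]) auto
    then have "d2 L (turn_curve l R) s = ?D"
      using assms(2) d1 by (intro d2_eqI) auto
    then show ?thesis using 2 R_pos by (simp add: norm_mult norm_divide norm_a)
  next
    case 3
    have "d2 L (turn_curve l R) s = 0"
      using assms(2) d1 g[of "{l + R * \<Omega><..}" "\<lambda>_. a * cis \<Omega>"] 3 turn_angle_after
      by (intro d2_eqI) auto
    then show ?thesis using 3 by simp
  qed
qed

lemma Linf_d2_turn_curve:
  assumes "l + R * \<Omega> \<le> L"
  shows "Linf_d2 L (turn_curve l R) = ereal (1 / R)"
  unfolding Linf_d2_def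
proof (rule esssup_lebesgue_on_step[of l "l + R * \<Omega>" L "{0, l, l + R * \<Omega>, L}"])
  fix s assume "s \<in> {0..L} - {0, l, l + R * \<Omega>, L}"
  then show "norm (d2 L (turn_curve l R) s) = (if s \<in> {l<..<l + R * \<Omega>} then 1 / R else 0)"
    using assms by (intro norm_d2_turn_curve) auto
qed (use assms l_nonneg R_pos angle_pos in auto)

lemma shape_turn_curve:
  assumes "0 \<le> m" "l = 0 \<or> m = 0" "L = l + R * \<Omega> + m"
    and "dist Oc P = dist Oc Q \<longleftrightarrow> l = 0 \<and> m = 0"
  shows "shape Oc P Q R L (turn_curve l R)"
proof -
  have arc: "0 < R * \<Omega>" "R * \<Omega> < R * pi" using R_pos angle_pos angle_less_pi by auto
  consider "l = 0" "m = 0" | "0 < l" "m = 0" | "l = 0" "0 < m"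
    using assms(1,2) l_nonneg by linarith
  then show ?thesis
  proof cases
    case 1
    then show ?thesis
      unfolding shape_def using arc assms(3,4) R_pos arc_on_turn_curve by auto
  next
    case 2
    then have "0 < l \<and> l < L \<and> L - l < R * pi \<and> seg_on 0 l (turn_curve l R)
        \<and> arc_on R l L (turn_curve l R)"
      using arc assms(3) seg_on_turn_curve_initial arc_on_turn_curve by auto
    then show ?thesis unfolding shape_def using 2 assms(4) R_pos by auto
  next
    case 3
    then have "0 < R * \<Omega> \<and> R * \<Omega> < L \<and> R * \<Omega> < R * pi
        \<and> arc_on R 0 (R * \<Omega>) (turn_curve l R) \<and> seg_on (R * \<Omega>) L (turn_curve l R)"
      using arc assms(3) arc_on_turn_curve seg_on_turn_curve_final by auto
    then show ?thesis unfolding shape_def using 3 assms(4) R_pos by (auto intro!: exI[of _ "R * \<Omega>"])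
  qed
qed

lemma in_E_turn_curve:
  assumes "0 \<le> m" "L = l + R * \<Omega> + m" "turn_curve l R L = B"
    and "(Oc - A) / of_real (norm (Oc - A)) = a" "(B - Oc) / of_real (norm (B - Oc)) = a * cis \<Omega>"
  shows "in_E Oc A B L (turn_curve l R)"
  unfolding in_E_def Let_def assms(4,5)
proof (intro conjI exI)
  show L: "0 < L" using assms(1,2) l_nonneg mult_pos_pos[OF R_pos angle_pos] by simp
  show "W2inf L (turn_curve l R)" using L by (rule W2inf_turn_curve)
  show "\<forall>s\<in>{0..L}. d1 L (turn_curve l R) s = a * cis (turn_angle l R s)"
    using L d1_turn_curve by simp
  then show "\<forall>s\<in>{0..L}. norm (d1 L (turn_curve l R) s) = 1"
    by (simp add: norm_mult norm_a)
  show "d1 L (turn_curve l R) 0 = a" using L l_nonneg by (simp add: d1_turn_curve turn_angle_before)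
  show "d1 L (turn_curve l R) L = a * cis \<Omega>"
    using L assms(1,2) by (simp add: d1_turn_curve turn_angle_after)
  show "turn_curve l R 0 = A" by (simp add: turn_curve_def)
  show "turn_curve l R L = B" by (fact assms(3))
  show "continuous_on {0..L} (turn_angle l R)" by (rule continuous_on_turn_angle)
  show "mono_on {0..L} (turn_angle l R)" using mono_turn_angle by (rule mono_imp_mono_on)
qed

end

lemma eq_turn_curve_if_d1:
  assumes "W2inf L X" "X 0 = A" "\<And>s. s \<in> {0..L} \<Longrightarrow> d1 L X s = a * cis (turn_angle l R s)"
    and "s \<in> {0..L}"
  shows "X s = turn_curve l R s"
proof -
  have "integral {0..s} (d1 L X) = integral {0..s} (\<lambda>u. a * cis (turn_angle l R u))"
    using assms(3,4) by (intro integral_cong) auto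
  then show ?thesis
    using W2inf_integral_d1[OF assms(1,4)] assms(2) by (simp add: turn_curve_def)
qed

lemma shape_imp_turn_curve:
  assumes W: "W2inf L X" and X0: "X 0 = A" and D0: "d1 L X 0 = a" and DL: "d1 L X L = a * cis \<Omega>"
    and "shape Oc P Q R L X"
  shows "\<exists>l m. 0 \<le> l \<and> 0 \<le> m \<and> (l = 0 \<or> m = 0) \<and> L = l + R * \<Omega> + m
    \<and> (\<forall>s\<in>{0..L}. X s = turn_curve l R s)"
proof -
  have R: "0 < R" using assms(5) unfolding shape_def by simp
  consider (arc) "0 < L" "L < R * pi" "arc_on R 0 L X"
    | (arc_seg) l where "0 < l" "l < L" "l < R * pi" "arc_on R 0 l X" "seg_on l L X"
    | (seg_arc) l where "0 < l" "l < L" "L - l < R * pi" "seg_on 0 l X" "arc_on R l L X"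
    using assms(5) unfolding shape_def by (auto split: if_splits)
  then show ?thesis
  proof cases
    case arc
    have "L = R * \<Omega>" "\<forall>s\<in>{0..L}. d1 L X s = a * cis (s / R)"
      using d1_on_arc[OF arc(3) W] arc R DL D0 angle_pos angle_less_pi by auto
    then have "\<forall>s\<in>{0..L}. X s = turn_curve 0 R s"
      using R by (intro ballI eq_turn_curve_if_d1[OF W X0]) (auto simp: turn_angle_on_arc)
    then show ?thesis using \<open>L = R * \<Omega>\<close> by (intro exI[of _ 0]) auto
  next
    case arc_seg
    have seg: "d1 L X s = a * cis \<Omega>" if "s \<in> {l..L}" for s
      using d1_const_on_seg[OF arc_seg(5) W _ _ _ that] arc_seg DL by auto
    have l: "l = R * \<Omega>" and arc: "\<forall>s\<in>{0..l}. d1 L X s = a * cis (s / R)"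
      using d1_on_arc[OF arc_seg(4) W] arc_seg R seg[of l] D0 angle_pos angle_less_pi by auto
    have "d1 L X s = a * cis (turn_angle 0 R s)" if "s \<in> {0..L}" for s
      using that R seg[of s] arc l by (cases "s \<le> l") (auto simp: turn_angle_on_arc turn_angle_after)
    then have "\<forall>s\<in>{0..L}. X s = turn_curve 0 R s"
      by (intro ballI eq_turn_curve_if_d1[OF W X0])
    then show ?thesis using l arc_seg(2) by (intro exI[of _ "0::real"] exI[of _ "L - l"]) auto
  next
    case seg_arc
    have seg: "d1 L X s = a" if "s \<in> {0..l}" for s
      using d1_const_on_seg[OF seg_arc(4) W _ _ _ that] d1_const_on_seg[OF seg_arc(4) W, of 0]
        seg_arc D0 by auto
    have l: "L - l = R * \<Omega>" and arc: "\<forall>s\<in>{l..L}. d1 L X s = a * cis ((s - l) / R)"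
      using d1_on_arc[OF seg_arc(5) W] seg_arc R seg[of l] DL angle_pos angle_less_pi by auto
    have "d1 L X s = a * cis (turn_angle l R s)" if "s \<in> {0..L}" for s
      using that R seg[of s] arc l seg_arc(1)
      by (cases "s \<le> l") (auto simp: turn_angle_on_arc turn_angle_before)
    then have "\<forall>s\<in>{0..L}. X s = turn_curve l R s"
      by (intro ballI eq_turn_curve_if_d1[OF W X0])
    then show ?thesis using l seg_arc(1) by (intro exI[of _ l] exI[of _ 0]) auto
  qed
qed

lemma turn_curve_end_eqD:
  assumes "0 \<le> l" "0 < R" "0 \<le> m" "l = 0 \<or> m = 0"
    and "turn_curve l R (l + R * \<Omega> + m) = A + of_real dA * a + of_real dB * (a * cis \<Omega>)"
  shows "R * tan (\<Omega> / 2) = min dA dB \<and> l = dA - min dA dB \<and> m = dB - min dA dB"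
proof -
  have "a \<noteq> 0" "sin \<Omega> \<noteq> 0" using norm_a sin_angle_pos by auto
  moreover have "of_real (l + R * tan (\<Omega> / 2)) * a + of_real (R * tan (\<Omega> / 2) + m) * (a * cis \<Omega>)
      = of_real dA * a + of_real dB * (a * cis \<Omega>)"
    using assms(5) turn_curve_final[OF assms(1,2), of "l + R * \<Omega> + m"] assms(3) by simp
  ultimately have "l + R * tan (\<Omega> / 2) = dA \<and> R * tan (\<Omega> / 2) + m = dB"
    by (rule real_combination_cis_eq_iff[THEN iffD1])
  then show ?thesis using assms(1,3,4) by auto
qed

end

section \<open>The curve around the corner at O\<close>

locale corner_path = corner +
  fixes Oc B :: complex
  assumes start_direction: "(Oc - A) / of_real (norm (Oc - A)) = a"
    and end_direction: "(B - Oc) / of_real (norm (B - Oc)) = a * cis \<Omega>"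
begin

definition tangent_length :: real where
  "tangent_length = min (dist Oc A) (dist Oc B)"

text \<open>The radius of the circle tangent to both lines OA and OB at distance \<open>tangent_length\<close>
  from O; this is the paper's \<open>R\<^sub>a\<close>.\<close>
definition radius :: real where
  "radius = tangent_length / tan (\<Omega> / 2)"

definition initial_length :: real where
  "initial_length = dist Oc A - tangent_length"

definition final_length :: real where
  "final_length = dist Oc B - tangent_length"

definition curve_length :: real where
  "curve_length = initial_length + radius * \<Omega> + final_length"

definition corner_curve :: "real \<Rightarrow> complex" where
  "corner_curve = turn_curve initial_length radius"

lemma B_eq: "B = A + of_real (dist Oc A) * a + of_real (dist Oc B) * (a * cis \<Omega>)"
proof -
  have "Oc \<noteq> A" "Oc \<noteq> B" using start_direction end_direction norm_a by auto
  then show ?thesis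
    using start_direction end_direction by (auto simp: dist_norm norm_minus_commute field_simps)
qed

lemma curve_params:
  "0 \<le> initial_length" "0 < radius" "0 \<le> final_length" "initial_length = 0 \<or> final_length = 0"
  "radius * tan (\<Omega> / 2) = tangent_length"
proof -
  have "Oc \<noteq> A" "Oc \<noteq> B" using start_direction end_direction norm_a by auto
  then show "0 \<le> initial_length" "0 < radius" "0 \<le> final_length"
    "initial_length = 0 \<or> final_length = 0" "radius * tan (\<Omega> / 2) = tangent_length"
    using tan_half_angle_pos
    by (auto simp: initial_length_def final_length_def radius_def tangent_length_def)
qed

lemma in_E_corner_curve: "in_E Oc A B curve_length corner_curve"
  unfolding corner_curve_def
proof (rule in_E_turn_curve[OF curve_params(1-3) curve_length_def _ start_direction end_direction])
  have "turn_curve initial_length radius curve_length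
      = A + of_real (dist Oc A) * a + of_real (dist Oc B) * (a * cis \<Omega>)"
    using curve_params(1-3,5)
    by (simp add: turn_curve_final curve_length_def initial_length_def final_length_def
        algebra_simps)
  then show "turn_curve initial_length radius curve_length = B"
    using B_eq by (rule trans[OF _ sym])
qed

lemma shape_corner_curve: "shape Oc A B radius curve_length corner_curve"
  unfolding corner_curve_def
  by (rule shape_turn_curve[OF curve_params(1-4) curve_length_def])
    (auto simp: initial_length_def final_length_def tangent_length_def)

lemma Linf_d2_corner_curve: "Linf_d2 curve_length corner_curve = ereal (1 / radius)"
  unfolding corner_curve_def
  by (rule Linf_d2_turn_curve[OF curve_params(1,2)]) (simp add: curve_length_def curve_params(3))

lemma shape_curve_unique:
  assumes "in_E Oc A B L X" "shape Oc A B R L X"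
  shows "R = radius \<and> L = curve_length \<and> (\<forall>s\<in>{0..curve_length}. X s = corner_curve s)"
proof -
  have "0 < L" "W2inf L X" "X 0 = A" "d1 L X 0 = a" "d1 L X L = a * cis \<Omega>" "X L = B"
    using assms(1) unfolding in_E_def Let_def start_direction end_direction by auto
  then obtain l m where lm: "0 \<le> l" "0 \<le> m" "l = 0 \<or> m = 0" "L = l + R * \<Omega> + m"
    and X: "\<forall>s\<in>{0..L}. X s = turn_curve l R s"
    using shape_imp_turn_curve[OF _ _ _ _ assms(2)] by blast
  moreover have "0 < R" using assms(2) unfolding shape_def by simp
  moreover have "turn_curve l R (l + R * \<Omega> + m) = B"
    using X \<open>X L = B\<close> \<open>0 < L\<close> lm(4) by auto
  ultimately have "R * tan (\<Omega> / 2) = tangent_length \<and> l = initial_length \<and> m = final_length"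
    using turn_curve_end_eqD[of l R m] B_eq
    unfolding initial_length_def final_length_def tangent_length_def by blast
  then have "R = radius" "l = initial_length" "m = final_length"
    using curve_params(5) tan_half_angle_pos by (auto simp: radius_def field_simps)
  then show ?thesis using lm(4) X by (simp add: curve_length_def corner_curve_def)
qed

end

theorem lemma4p2:
  fixes Oc A B :: complex
  assumes "Oc \<noteq> A" and "Oc \<noteq> B" and "A \<noteq> B"
    and "Arg (((B - Oc) / of_real (norm (B - Oc))) / ((Oc - A) / of_real (norm (Oc - A))))
           \<in> {0<..<pi}"
  shows "\<exists>R L X. in_E Oc A B L X \<and> shape Oc A B R L X \<and> Linf_d2 L X = ereal (1 / R)
           \<and> (\<forall>R' L' X'. in_E Oc A B L' X' \<and> shape Oc A B R' L' X' \<longrightarrow>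
                 R' = R \<and> L' = L \<and> (\<forall>s\<in>{0..L}. X' s = X s))"
proof -
  define a where "a = (Oc - A) / of_real (norm (Oc - A))"
  define b where "b = (B - Oc) / of_real (norm (B - Oc))"
  define \<Omega> where "\<Omega> = Arg (b / a)"
  have "norm a = 1" "norm b = 1" using assms(1,2) by (simp_all add: a_def b_def norm_divide)
  then have "b = a * cis \<Omega>" unfolding \<Omega>_def by (rule cis_Arg_divide)
  interpret corner_path A a \<Omega> Oc B
  proof unfold_locales
    show "0 < \<Omega>" "\<Omega> < pi" using assms(4) by (simp_all add: \<Omega>_def a_def b_def)
    show "(B - Oc) / of_real (norm (B - Oc)) = a * cis \<Omega>"
      using \<open>b = a * cis \<Omega>\<close> by (simp add: b_def)
  qed (use \<open>norm a = 1\<close> in \<open>simp_all add: a_def\<close>)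
  show ?thesis
    using in_E_corner_curve shape_corner_curve Linf_d2_corner_curve shape_curve_unique by blast
qed

end
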